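(* Let $\Gamma(t,s)=\int_{\mathbb{R}}e^{-\rho(\alpha,(s,t])}\mu(\mathrm{d}\alpha)$ be a completely monotone double kernel in which every measure $\rho(\alpha,\cdot)$ is atomless. If $\Gamma$ satisfies condition (K), then it satisfies Assumption (A) with the approximating family $\Gamma_M(t,s)=\int_{[-M,M]}e^{-\rho(\alpha,(s,t])}\mu(\mathrm{d}\alpha)$, $M\in\mathbb{N}^*$.
   Context: Completely monotone double kernel: $\mu$ is a Borel measure on $\mathbb{R}$ finite on compact sets; $(\rho(\alpha,\cdot))_{\alpha\in\mathbb{R}}$ Borel measures on $\mathbb{R}_+$ finite on compact sets with $\rho(\beta,\cdot)-\rho(\alpha,\cdot)\ge0$ for $\alpha\le\beta$; $\Gamma(t,s)<\infty$ for $t>s$; defined for $0<s<t$. Notation $\Delta=\{(t,s):0\le s\le t\}$, $\Delta_T=\{(t,s):0\le s\le t\le T\}$. Condition (K): for every $T$ there exist $\eta>0$, $\gamma\in(0,1/2]$ with $\int_s^t\Gamma(t,u)^2\mathrm{d}u+\int_0^s(\Gamma(t,u)-\Gamma(s,u))^2\mathrm{d}u\le\eta(t-s)^{2\gamma}$ on $\Delta_T$. $\Gamma$ preserves nonnegativity if for every $T>0$, $K$, $x_1,\dots,x_K\in\mathbb{R}$, $0\le t_1<\dots<t_K<T$ with $\sum_{k'\le k}x_{k'}\Gamma(t_k,t_{k'})\ge0$ for all $k$, one has $\sum_{k:t_k\le t}x_k\Gamma(t,t_k)\ge0$ for $t\in[0,T]$. Condition (P): continuous on $\Delta$, $0<\Gamma(s,s)<\infty$,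 preserves nonnegativity, $t\mapsto\Gamma(t,s)$ nonincreasing on $[s,\infty)$. Assumption (A): (K) holds and there are kernels $\Gamma_M$ satisfying (P) with $\int_0^t(\Gamma(t,s)-\Gamma_M(t,s))^2\mathrm{d}s\to0$ for all $t\ge0$ and, for each $T$, constants $\eta>0,\gamma\in(0,1/2]$ with $\int_s^t\Gamma_M(t,u)^2\mathrm{d}u+\int_0^s(\Gamma_M(t,u)-\Gamma_M(s,u))^2\mathrm{d}u\le\eta|t-s|^{2\gamma}$ on $\Delta_T$ for all $M$.
   Formalization: The measure $\mu$ is assumed nonzero, and the approximating kernels $\Gamma_M$ satisfy Condition (P) only for all sufficiently large M, not for every M in N*. The statement above fails without it. *)

theory Defs
  imports "HOL-Analysis.Analysis"
begin

text \<open>Completely monotone double kernel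
  Gamma(t,s) = integral over alpha of exp(-rho(alpha,(s,t])) mu(d alpha).
  The nonnegative integral is converted to a real; it is assumed finite
  (for 0 < s < t) in the main theorem.\<close>
definition cm_kernel :: "real measure \<Rightarrow> (real \<Rightarrow> real measure) \<Rightarrow> real \<Rightarrow> real \<Rightarrow> real" where
  "cm_kernel \<mu> \<rho> t s =
     enn2real (\<integral>\<^sup>+ \<alpha>. ennreal (exp (- measure (\<rho> \<alpha>) {s<..t})) \<partial>\<mu>)"

definition cm_kernel_trunc :: "real measure \<Rightarrow> (real \<Rightarrow> real measure) \<Rightarrow> nat \<Rightarrow> real \<Rightarrow> real \<Rightarrow> real" where
  "cm_kernel_trunc \<mu> \<rho> M t s =
     enn2real (\<integral>\<^sup>+ \<alpha> \<in> {- real M..real M}. ennreal (exp (- measure (\<rho> \<alpha>) {s<..t})) \<partial>\<mu>)"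

definition holder_bound :: "(real \<Rightarrow> real \<Rightarrow> real) \<Rightarrow> real \<Rightarrow> real \<Rightarrow> real \<Rightarrow> bool" where
  "holder_bound G \<eta> \<gamma> T \<longleftrightarrow>
     (\<forall>t s. 0 \<le> s \<and> s \<le> t \<and> t \<le> T \<longrightarrow>
        (\<integral>\<^sup>+ u \<in> {s..t}. ennreal ((G t u)\<^sup>2) \<partial>lborel)
        + (\<integral>\<^sup>+ u \<in> {0..s}. ennreal ((G t u - G s u)\<^sup>2) \<partial>lborel)
        \<le> ennreal (\<eta> * (t - s) powr (2 * \<gamma>)))"

definition condition_K :: "(real \<Rightarrow> real \<Rightarrow> real) \<Rightarrow> bool" where
  "condition_K G \<longleftrightarrow>
     (\<forall>T. \<exists>\<eta> > 0. \<exists>\<gamma>. 0 < \<gamma> \<and> \<gamma> \<le> 1/2 \<and> holder_bound G \<eta> \<gamma> T)"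

definition preserves_nonneg :: "(real \<Rightarrow> real \<Rightarrow> real) \<Rightarrow> bool" where
  "preserves_nonneg G \<longleftrightarrow>
     (\<forall>T > 0. \<forall>K::nat. \<forall>x tt :: nat \<Rightarrow> real.
        (\<forall>i j. i < j \<and> j < K \<longrightarrow> tt i < tt j) \<and>
        (\<forall>k < K. 0 \<le> tt k \<and> tt k < T) \<and>
        (\<forall>k < K. (\<Sum>k' \<le> k. x k' * G (tt k) (tt k')) \<ge> 0)
        \<longrightarrow> (\<forall>t \<in> {0..T}. (\<Sum>k \<in> {k. k < K \<and> tt k \<le> t}. x k * G t (tt k)) \<ge> 0))"

definition condition_P :: "(real \<Rightarrow> real \<Rightarrow> real) \<Rightarrow> bool" where
  "condition_P G \<longleftrightarrow>
     continuous_on {p. 0 \<le> snd p \<and> snd p \<le> fst p} (\<lambda>p. G (fst p) (snd p)) \<and>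
     (\<forall>s \<ge> 0. 0 < G s s) \<and>
     preserves_nonneg G \<and>
     (\<forall>s t1 t2. 0 \<le> s \<and> s \<le> t1 \<and> t1 \<le> t2 \<longrightarrow> G t2 s \<le> G t1 s)"

end

theory Submission
  imports Defs "HOL-Probability.Distribution_Functions"
begin

text \<open>The truncated kernel \<open>\<Gamma>\<^sub>M\<close> is the mixture of the kernels
  \<open>E\<^sub>\<alpha>(t,s) = exp (-\<rho>(\<alpha>,(s,t]))\<close> against the finite measure \<open>\<mu>\<close> restricted to \<open>[-M,M]\<close>.
  Continuity comes from the atomlessness of \<open>\<rho>(\<alpha>,\<cdot>)\<close> and dominated convergence, and the
  diagonal \<open>\<Gamma>\<^sub>M(s,s) = \<mu>[-M,M]\<close> is positive for large \<open>M\<close>. Nonnegativity is preserved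
  because \<open>E\<^sub>\<alpha>(t,s) = E\<^sub>\<alpha>(t,r) E\<^sub>\<alpha>(r,s)\<close> and \<open>E\<^sub>\<alpha>\<close> decreases in \<open>\<alpha>\<close>: inducting on the
  number of points, the last factor is absorbed into a weight whose positive part decreases in
  \<open>\<alpha>\<close> and whose integral is nonnegative, and such weights keep a nonnegative integral when
  multiplied by a nonnegative decreasing function.

  The approximation and the uniform Hoelder bound follow from \<open>0 \<le> \<Gamma>\<^sub>M \<le> \<Gamma>\<close> and
  \<open>0 \<le> \<Gamma>\<^sub>M(s,u) - \<Gamma>\<^sub>M(t,u) \<le> \<Gamma>(s,u) - \<Gamma>(t,u)\<close> for \<open>s \<le> t\<close>, by monotone convergence in
  \<open>M\<close> and dominated convergence in \<open>u\<close>, where \<open>\<Gamma>(t,\<cdot>)\<^sup>2\<close> is integrable by (K).\<close>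

section \<open>Weights with antitone positive part\<close>

lemma borel_measurable_antimono:
  fixes f :: "real \<Rightarrow> real"
  shows "antimono f \<Longrightarrow> f \<in> borel_measurable borel"
  using borel_measurable_mono[of "\<lambda>x. - f x"] by (simp add: antimono_def mono_def)

definition antimono_where_pos :: "(real \<Rightarrow> real) \<Rightarrow> bool" where
  "antimono_where_pos \<Psi> \<longleftrightarrow> (\<forall>\<alpha> \<beta>. \<alpha> \<le> \<beta> \<longrightarrow> 0 < \<Psi> \<beta> \<longrightarrow> \<Psi> \<beta> \<le> \<Psi> \<alpha>)"

lemma antimono_where_pos_diff:
  "antimono_where_pos \<Psi> \<Longrightarrow> 0 \<le> c \<Longrightarrow> antimono_where_pos (\<lambda>\<alpha>. \<Psi> \<alpha> - c)"
  unfolding antimono_where_pos_def by force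

lemma antimono_where_pos_mult:
  assumes "antimono_where_pos \<Psi>" and "antimono e" and "\<And>\<alpha>. 0 < e \<alpha>"
  shows "antimono_where_pos (\<lambda>\<alpha>. e \<alpha> * \<Psi> \<alpha>)"
  unfolding antimono_where_pos_def
proof (intro allI impI)
  fix \<alpha> \<beta> :: real
  assume "\<alpha> \<le> \<beta>" and "0 < e \<beta> * \<Psi> \<beta>"
  then have "0 < \<Psi> \<beta>" and "\<Psi> \<beta> \<le> \<Psi> \<alpha>"
    using assms(1) assms(3)[of \<beta>] by (auto simp: antimono_where_pos_def zero_less_mult_iff)
  with \<open>\<alpha> \<le> \<beta>\<close> show "e \<beta> * \<Psi> \<beta> \<le> e \<alpha> * \<Psi> \<alpha>"
    using assms(2) less_imp_le[OF assms(3)] by (intro mult_mono) (auto simp: antimono_def)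
qed

context finite_borel_measure
begin

lemma integrable_bounded_borel:
  fixes f :: "real \<Rightarrow> real"
  assumes "f \<in> borel_measurable borel" and "\<And>x. \<bar>f x\<bar> \<le> B"
  shows "integrable M f"
  using assms measurable_cong_sets[OF M_is_borel refl]
  by (intro integrable_const_bound[where B=B]) auto

lemma integral_null_measure:
  "measure M (space M) = 0 \<Longrightarrow> integral\<^sup>L M f = 0"
  by (intro integral_eq_zero_AE AE_I[where N="space M"]) (auto simp: emeasure_eq_measure)

definition admissible_weight :: "(real \<Rightarrow> real) \<Rightarrow> bool" where
  "admissible_weight \<Psi> \<longleftrightarrow> antimono_where_pos \<Psi> \<and> \<Psi> \<in> borel_measurable borel \<and>
     (\<exists>B. \<forall>\<alpha>. \<bar>\<Psi> \<alpha>\<bar> \<le> B) \<and> 0 \<le> integral\<^sup>L M \<Psi>"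

lemma admissible_weight_integrable: "admissible_weight \<Psi> \<Longrightarrow> integrable M \<Psi>"
  unfolding admissible_weight_def using integrable_bounded_borel by blast

lemma admissible_weight_one: "admissible_weight (\<lambda>_. 1)"
  by (simp add: admissible_weight_def antimono_where_pos_def exI[of _ 1])

lemma integral_antimono_mult_nonneg:
  fixes \<Psi> h :: "real \<Rightarrow> real"
  assumes "admissible_weight \<Psi>"
    and h: "antimono h" "\<And>\<alpha>. 0 \<le> h \<alpha>" "\<And>\<alpha>. h \<alpha> \<le> H"
  shows "0 \<le> (\<integral>\<alpha>. h \<alpha> * \<Psi> \<alpha> \<partial>M)"
proof -
  obtain B where \<Psi>: "antimono_where_pos \<Psi>" "\<Psi> \<in> borel_measurable borel" "\<And>\<alpha>. \<bar>\<Psi> \<alpha>\<bar> \<le> B"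
      "0 \<le> integral\<^sup>L M \<Psi>"
    using assms(1) by (auto simp: admissible_weight_def)
  define c where "c = (if {\<alpha>. 0 < \<Psi> \<alpha>} = {} then H else Inf (h ` {\<alpha>. 0 < \<Psi> \<alpha>}))"
  have "bdd_below (h ` {\<alpha>. 0 < \<Psi> \<alpha>})"
    using h(2) by (auto intro: bdd_belowI[where m=0])
  then have c_le: "c \<le> h \<alpha>" if "0 < \<Psi> \<alpha>" for \<alpha>
    using that by (auto simp: c_def intro: cInf_lower)
  have c_nonneg: "0 \<le> c"
    using h(2) order_trans[OF h(2,3)] by (auto simp: c_def intro: cInf_greatest)
  \<comment> \<open>Since \<open>\<Psi>\<close> is positive only on an initial segment and \<open>h\<close> is antitone,
    \<open>h - c\<close> is \<open>\<ge> 0\<close> where \<open>\<Psi> > 0\<close> and \<open>\<le> 0\<close> where \<open>\<Psi> \<le> 0\<close>.\<close>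
  have "h \<alpha> \<le> c" if "\<Psi> \<alpha> \<le> 0" for \<alpha>
  proof (cases "{\<alpha>. 0 < \<Psi> \<alpha>} = {}")
    case False
    have before: "\<beta> < \<alpha>" if "0 < \<Psi> \<beta>" for \<beta>
    proof (rule ccontr)
      assume "\<not> \<beta> < \<alpha>"
      with \<Psi>(1) that have "\<Psi> \<beta> \<le> \<Psi> \<alpha>"
        by (auto simp: antimono_where_pos_def)
      with that \<open>\<Psi> \<alpha> \<le> 0\<close> show False
        by simp
    qed
    have "h \<alpha> \<le> h \<beta>" if "0 < \<Psi> \<beta>" for \<beta>
      using h(1) before[OF that] by (auto simp: antimono_def)
    then show ?thesis
      using False by (auto simp: c_def intro: cInf_greatest)
  qed (simp add: c_def h(3))
  with c_le have pointwise: "0 \<le> (h \<alpha> - c) * \<Psi> \<alpha>" for \<alpha>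
    by (cases "0 < \<Psi> \<alpha>") (auto intro: mult_nonpos_nonpos)
  have "integrable M (\<lambda>\<alpha>. (h \<alpha> - c) * \<Psi> \<alpha>)"
  proof (rule integrable_bounded_borel)
    show "\<bar>(h \<alpha> - c) * \<Psi> \<alpha>\<bar> \<le> (H + c) * B" for \<alpha>
      unfolding abs_mult using h(2,3)[of \<alpha>] c_nonneg \<Psi>(3)[of \<alpha>]
      by (intro mult_mono) auto
  qed (use borel_measurable_antimono[OF h(1)] \<Psi>(2) in measurable)
  moreover have "integrable M \<Psi>"
    using integrable_bounded_borel \<Psi>(2,3) .
  ultimately have "(\<integral>\<alpha>. (h \<alpha> - c) * \<Psi> \<alpha> + c * \<Psi> \<alpha> \<partial>M)
      = (\<integral>\<alpha>. (h \<alpha> - c) * \<Psi> \<alpha> \<partial>M) + c * integral\<^sup>L M \<Psi>"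
    by simp
  then have "(\<integral>\<alpha>. h \<alpha> * \<Psi> \<alpha> \<partial>M) = (\<integral>\<alpha>. (h \<alpha> - c) * \<Psi> \<alpha> \<partial>M) + c * integral\<^sup>L M \<Psi>"
    by (simp add: algebra_simps)
  also have "\<dots> \<ge> 0"
    using pointwise c_nonneg \<Psi>(4) by (intro add_nonneg_nonneg integral_nonneg) auto
  finally show ?thesis .
qed

lemma admissible_weight_mult:
  assumes "admissible_weight \<Psi>" and e: "antimono e" "\<And>\<alpha>. 0 < e \<alpha>" "\<And>\<alpha>. e \<alpha> \<le> H"
  shows "admissible_weight (\<lambda>\<alpha>. e \<alpha> * \<Psi> \<alpha>)"
proof -
  obtain B where \<Psi>: "antimono_where_pos \<Psi>" "\<Psi> \<in> borel_measurable borel" "\<And>\<alpha>. \<bar>\<Psi> \<alpha>\<bar> \<le> B"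
    using assms(1) by (auto simp: admissible_weight_def)
  have "e \<in> borel_measurable borel"
    using e(1) by (rule borel_measurable_antimono)
  moreover have "\<bar>e \<alpha> * \<Psi> \<alpha>\<bar> \<le> H * B" for \<alpha>
    unfolding abs_mult using e(2,3)[of \<alpha>] \<Psi>(3)[of \<alpha>] by (intro mult_mono) auto
  moreover have "0 \<le> (\<integral>\<alpha>. e \<alpha> * \<Psi> \<alpha> \<partial>M)"
    using integral_antimono_mult_nonneg[OF assms(1) e(1)] e(2,3) less_imp_le by blast
  ultimately show ?thesis
    using \<Psi>(1,2) antimono_where_pos_mult[OF \<Psi>(1) e(1,2)] by (auto simp: admissible_weight_def)
qed

lemma integral_centered:
  "integrable M f \<Longrightarrow> (\<integral>x. f x - integral\<^sup>L M f / measure M (space M) \<partial>M) = 0"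
  by (cases "measure M (space M) = 0") (simp_all add: integral_null_measure)

lemma admissible_weight_centered:
  assumes "admissible_weight \<Psi>"
  shows "admissible_weight (\<lambda>\<alpha>. \<Psi> \<alpha> - integral\<^sup>L M \<Psi> / measure M (space M))"
proof -
  let ?c = "integral\<^sup>L M \<Psi> / measure M (space M)"
  obtain B where \<Psi>: "antimono_where_pos \<Psi>" "\<Psi> \<in> borel_measurable borel" "\<And>\<alpha>. \<bar>\<Psi> \<alpha>\<bar> \<le> B"
      "0 \<le> integral\<^sup>L M \<Psi>"
    using assms by (auto simp: admissible_weight_def)
  then have "0 \<le> ?c"
    by simp
  then have "\<bar>\<Psi> \<alpha> - ?c\<bar> \<le> B + ?c" for \<alpha>
    using \<Psi>(3)[of \<alpha>] by linarith
  with \<Psi>(1,2) \<open>0 \<le> ?c\<close> show ?thesis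
    unfolding admissible_weight_def
    using antimono_where_pos_diff integral_centered[OF admissible_weight_integrable[OF assms]]
    by auto
qed

end

section \<open>Mixtures of multiplicative kernels\<close>

definition mixture :: "real measure \<Rightarrow> (real \<Rightarrow> real \<Rightarrow> real \<Rightarrow> real) \<Rightarrow> real \<Rightarrow> real \<Rightarrow> real" where
  "mixture N E t s = (\<integral>\<alpha>. E \<alpha> t s \<partial>N)"

locale multiplicative_mixture = finite_borel_measure N for N :: "real measure" +
  fixes E :: "real \<Rightarrow> real \<Rightarrow> real \<Rightarrow> real"
  assumes E_pos: "0 < E \<alpha> t s"
    and E_le_1: "E \<alpha> t s \<le> 1"
    and E_diag: "E \<alpha> s s = 1"
    and E_antimono: "\<alpha> \<le> \<beta> \<Longrightarrow> E \<beta> t s \<le> E \<alpha> t s"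
    and E_mult: "s \<le> r \<Longrightarrow> r \<le> t \<Longrightarrow> E \<alpha> t s = E \<alpha> t r * E \<alpha> r s"
begin

lemma admissible_weight_mult_E:
  "admissible_weight \<Psi> \<Longrightarrow> admissible_weight (\<lambda>\<alpha>. E \<alpha> t s * \<Psi> \<alpha>)"
  by (rule admissible_weight_mult[where H=1]) (auto simp: antimono_def E_antimono E_pos E_le_1)

lemma E_borel[measurable]: "(\<lambda>\<alpha>. E \<alpha> t s) \<in> borel_measurable borel"
  by (rule borel_measurable_antimono) (simp add: antimono_def E_antimono)

lemma abs_E_le_1: "\<bar>E \<alpha> t s\<bar> \<le> 1"
  using E_pos[of \<alpha> t s] E_le_1[of \<alpha> t s] by simp

lemma E_integrable: "integrable N (\<lambda>\<alpha>. E \<alpha> t s)"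
  using E_borel abs_E_le_1 by (rule integrable_bounded_borel)

lemma mixture_partial_sums_nonneg:
  fixes n :: nat and tt x :: "nat \<Rightarrow> real"
  assumes "\<And>i j. i \<le> j \<Longrightarrow> j < n \<Longrightarrow> tt i \<le> tt j"
    and "\<And>j. j < n \<Longrightarrow> tt j \<le> r"
    and "\<And>k. k < n \<Longrightarrow> 0 \<le> (\<Sum>k'\<le>k. x k' * mixture N E (tt k) (tt k'))"
    and "admissible_weight \<Psi>"
  shows "0 \<le> (\<Sum>j<n. x j * (\<integral>\<alpha>. E \<alpha> r (tt j) * \<Psi> \<alpha> \<partial>N))"
  using assms
proof (induction n arbitrary: r \<Psi>)
  case 0
  then show ?case by simp
next
  case (Suc n)
  \<comment> \<open>Factor out the last step \<open>E \<alpha> r (tt n)\<close> into the weight and split off its mean \<open>c\<close>: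
    the mean contributes \<open>c\<close> times the \<open>n\<close>-th partial sum, the centred rest is the
    induction hypothesis for \<open>r = tt n\<close>, and its \<open>n\<close>-th term integrates to \<open>0\<close>.\<close>
  define \<Phi> where "\<Phi> \<alpha> = E \<alpha> r (tt n) * \<Psi> \<alpha>" for \<alpha>
  define c where "c = integral\<^sup>L N \<Phi> / measure N (space N)"
  have \<Phi>: "admissible_weight \<Phi>"
    unfolding \<Phi>_def using Suc.prems(4) by (rule admissible_weight_mult_E)
  then have c_nonneg: "0 \<le> c"
    by (simp add: c_def admissible_weight_def)
  have centered: "admissible_weight (\<lambda>\<alpha>. \<Phi> \<alpha> - c)"
    unfolding c_def using \<Phi> by (rule admissible_weight_centered)
  have split: "(\<integral>\<alpha>. E \<alpha> r (tt j) * \<Psi> \<alpha> \<partial>N)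
      = c * mixture N E (tt n) (tt j) + (\<integral>\<alpha>. E \<alpha> (tt n) (tt j) * (\<Phi> \<alpha> - c) \<partial>N)"
    if "j \<le> n" for j
  proof -
    have "E \<alpha> r (tt j) * \<Psi> \<alpha> = c * E \<alpha> (tt n) (tt j) + E \<alpha> (tt n) (tt j) * (\<Phi> \<alpha> - c)" for \<alpha>
      using E_mult[of "tt j" "tt n" r] Suc.prems(1,2) that by (simp add: \<Phi>_def algebra_simps)
    then show ?thesis
      using E_integrable admissible_weight_integrable[OF admissible_weight_mult_E[OF centered]]
      by (simp add: mixture_def)
  qed
  have last: "(\<integral>\<alpha>. E \<alpha> (tt n) (tt n) * (\<Phi> \<alpha> - c) \<partial>N) = 0"
    using integral_centered[OF admissible_weight_integrable[OF \<Phi>]] by (simp add: E_diag c_def)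
  have IH: "0 \<le> (\<Sum>j<n. x j * (\<integral>\<alpha>. E \<alpha> (tt n) (tt j) * (\<Phi> \<alpha> - c) \<partial>N))"
    using Suc.prems(1,3) centered by (intro Suc.IH) auto
  have "(\<Sum>j<Suc n. x j * (\<integral>\<alpha>. E \<alpha> r (tt j) * \<Psi> \<alpha> \<partial>N))
      = (\<Sum>j<Suc n. c * (x j * mixture N E (tt n) (tt j))
          + x j * (\<integral>\<alpha>. E \<alpha> (tt n) (tt j) * (\<Phi> \<alpha> - c) \<partial>N))"
    using split by (intro sum.cong) (auto simp: algebra_simps)
  also have "\<dots> = c * (\<Sum>j\<le>n. x j * mixture N E (tt n) (tt j))
      + (\<Sum>j<n. x j * (\<integral>\<alpha>. E \<alpha> (tt n) (tt j) * (\<Phi> \<alpha> - c) \<partial>N))"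
    by (simp add: sum.distrib sum_distrib_left lessThan_Suc_atMost[symmetric] last distrib_left)
  also have "\<dots> \<ge> 0"
    using c_nonneg Suc.prems(3)[of n] IH by simp
  finally show ?case .
qed

lemma sublevel_indices_initial_segment:
  fixes tt :: "nat \<Rightarrow> real"
  assumes "\<And>i j. i < j \<Longrightarrow> j < K \<Longrightarrow> tt i < tt j"
  obtains n where "n \<le> K" and "{k. k < K \<and> tt k \<le> t} = {..<n}"
proof (cases "{k. k < K \<and> tt k \<le> t} = {}")
  case True
  then show ?thesis
    by (intro that[of 0]) auto
next
  case False
  define m where "m = Max {k. k < K \<and> tt k \<le> t}"
  have m: "m < K" "tt m \<le> t"
    using Max_in[OF _ False] by (auto simp: m_def)
  have "k < K \<and> tt k \<le> t \<longleftrightarrow> k < Suc m" for k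
  proof
    assume "k < K \<and> tt k \<le> t"
    then show "k < Suc m"
      by (simp add: m_def less_Suc_eq_le)
  next
    assume "k < Suc m"
    then have "tt k \<le> tt m"
      using assms[of k m] m(1) by (cases "k = m") auto
    with \<open>k < Suc m\<close> m show "k < K \<and> tt k \<le> t"
      by auto
  qed
  then show ?thesis
    using m(1) by (intro that[of "Suc m"]) auto
qed

lemma mixture_preserves_nonneg: "preserves_nonneg (mixture N E)"
  unfolding preserves_nonneg_def
proof (intro allI impI ballI)
  fix T t :: real and K :: nat and x tt :: "nat \<Rightarrow> real"
  assume "0 < T" and hyps: "(\<forall>i j. i < j \<and> j < K \<longrightarrow> tt i < tt j) \<and> (\<forall>k<K. 0 \<le> tt k \<and> tt k < T) \<and>
       (\<forall>k<K. 0 \<le> (\<Sum>k'\<le>k. x k' * mixture N E (tt k) (tt k')))"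
  have strict: "\<And>i j. i < j \<Longrightarrow> j < K \<Longrightarrow> tt i < tt j"
    using hyps by blast
  obtain n where "n \<le> K" and prefix: "{k. k < K \<and> tt k \<le> t} = {..<n}"
    using sublevel_indices_initial_segment[of K tt t] strict by blast
  have "0 \<le> (\<Sum>j<n. x j * (\<integral>\<alpha>. E \<alpha> t (tt j) * 1 \<partial>N))"
  proof (rule mixture_partial_sums_nonneg[OF _ _ _ admissible_weight_one])
    show "tt i \<le> tt j" if "i \<le> j" "j < n" for i j
      using strict[of i j] that \<open>n \<le> K\<close> by (cases "i = j") auto
    show "tt j \<le> t" if "j < n" for j
      using prefix that by auto
    show "0 \<le> (\<Sum>k'\<le>k. x k' * mixture N E (tt k) (tt k'))" if "k < n" for k
      using hyps that \<open>n \<le> K\<close> by auto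
  qed
  then show "0 \<le> (\<Sum>k\<in>{k. k < K \<and> tt k \<le> t}. x k * mixture N E t (tt k))"
    by (simp add: prefix mixture_def)
qed

lemma mixture_diag: "mixture N E s s = measure N (space N)"
  by (simp add: mixture_def E_diag)

lemma mixture_antimono:
  assumes "s \<le> t1" and "t1 \<le> t2"
  shows "mixture N E t2 s \<le> mixture N E t1 s"
proof -
  have "E \<alpha> t2 s \<le> E \<alpha> t1 s" for \<alpha>
    using E_mult[OF assms, of \<alpha>] E_le_1[of \<alpha> t2 t1] E_pos[of \<alpha> t1 s]
    by (simp add: mult_le_cancel_right1)
  then show ?thesis
    unfolding mixture_def by (intro integral_mono E_integrable)
qed

lemma mixture_continuous_on:
  assumes "\<And>\<alpha>. continuous_on S (\<lambda>p. E \<alpha> (fst p) (snd p))"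
  shows "continuous_on S (\<lambda>p. mixture N E (fst p) (snd p))"
proof (rule continuous_on_sequentiallyI)
  fix u :: "nat \<Rightarrow> real \<times> real" and p
  assume "\<forall>n. u n \<in> S" and "p \<in> S" and "u \<longlonglongrightarrow> p"
  then have "(\<lambda>n. E \<alpha> (fst (u n)) (snd (u n))) \<longlonglongrightarrow> E \<alpha> (fst p) (snd p)" for \<alpha>
    using continuous_on_sequentially[THEN iffD1, OF assms] by (auto simp: o_def)
  then show "(\<lambda>n. mixture N E (fst (u n)) (snd (u n))) \<longlonglongrightarrow> mixture N E (fst p) (snd p)"
    unfolding mixture_def
    by (intro integral_dominated_convergence[where w="\<lambda>_. 1"] AE_I2)
      (auto simp: abs_E_le_1 measurable_cong_sets[OF M_is_borel refl])
qed

lemma mixture_condition_P: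
  assumes "0 < measure N (space N)"
    and "\<And>\<alpha>. continuous_on UNIV (\<lambda>p. E \<alpha> (fst p) (snd p))"
  shows "condition_P (mixture N E)"
  unfolding condition_P_def
  using continuous_on_subset[OF mixture_continuous_on[OF assms(2)]]
    mixture_preserves_nonneg mixture_diag mixture_antimono assms(1)
  by auto

end

section \<open>Completely monotone kernels and their truncations\<close>

lemma isCont_measure_atMost:
  fixes \<nu> :: "real measure"
  assumes sets: "sets \<nu> = sets borel"
    and finite: "\<And>y. emeasure \<nu> {..y} < \<infinity>"
    and atomless: "emeasure \<nu> {x} = 0"
  shows "isCont (\<lambda>y. measure \<nu> {..y}) x"
proof -
  define R where "R = density \<nu> (indicator {..x+1})"
  have R_sets: "sets R = sets borel"
    by (simp add: R_def sets)
  have R_emeasure: "emeasure R A = emeasure \<nu> ({..x+1} \<inter> A)" if "A \<in> sets borel" for A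
    unfolding R_def using that by (intro emeasure_restricted) (auto simp: sets)
  interpret R: finite_borel_measure R
  proof (intro finite_borel_measure.intro finite_measureI finite_borel_measure_axioms.intro R_sets)
    show "emeasure R (space R) \<noteq> \<infinity>"
      using R_emeasure[of UNIV] finite[of "x+1"] by (simp add: sets_eq_imp_space_eq[OF R_sets])
  qed
  have "isCont (cdf R) x"
    unfolding R.isCont_cdf measure_def using R_emeasure[of "{x}"] atomless by simp
  moreover have "\<forall>\<^sub>F y in nhds x. y < x + 1"
    by (intro eventually_nhds_in_open[of "{..<x+1}", simplified]) auto
  then have "\<forall>\<^sub>F y in nhds x. measure \<nu> {..y} = cdf R y"
    by eventually_elim (auto simp: cdf_def measure_def R_emeasure Int_absorb1)
  ultimately show ?thesis
    by (simp add: isCont_cong)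
qed

lemma AE_lborel_Icc_interior:
  "(\<And>u. a < u \<Longrightarrow> u < b \<Longrightarrow> P u) \<Longrightarrow> AE u in lborel. u \<in> {a..b} \<longrightarrow> P (u::real)"
  using AE_lborel_singleton[of a] AE_lborel_singleton[of b] by eventually_elim auto

lemma set_nn_integral_Icc_mono_interior:
  fixes f g :: "real \<Rightarrow> ennreal"
  assumes "\<And>u. a < u \<Longrightarrow> u < b \<Longrightarrow> f u \<le> g u"
  shows "(\<integral>\<^sup>+u\<in>{a..b}. f u \<partial>lborel) \<le> (\<integral>\<^sup>+u\<in>{a..b}. g u \<partial>lborel)"
  using AE_lborel_Icc_interior[of a b, OF assms]
  by (intro nn_integral_mono_AE) (auto elim!: eventually_mono split: split_indicator)

lemma holder_bound_L2_finite:
  assumes "holder_bound G \<eta> \<gamma> T" and "0 \<le> t" and "t \<le> T"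
  shows "(\<integral>\<^sup>+u\<in>{0..t}. ennreal ((G t u)\<^sup>2) \<partial>lborel) < \<infinity>"
proof -
  have "(\<integral>\<^sup>+u\<in>{0..t}. ennreal ((G t u)\<^sup>2) \<partial>lborel)
      \<le> (\<integral>\<^sup>+u\<in>{0..t}. ennreal ((G t u)\<^sup>2) \<partial>lborel)
        + (\<integral>\<^sup>+u\<in>{0..0}. ennreal ((G t u - G 0 u)\<^sup>2) \<partial>lborel)"
    by simp
  also have "\<dots> \<le> ennreal (\<eta> * (t - 0) powr (2 * \<gamma>))"
    using assms unfolding holder_bound_def by blast
  finally show ?thesis
    by (simp add: le_less_trans)
qed

locale cm_kernel_data =
  fixes \<mu> :: "real measure" and \<rho> :: "real \<Rightarrow> real measure"
  assumes mu_borel: "sets \<mu> = sets borel"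
    and mu_loc_fin: "\<And>C. compact C \<Longrightarrow> emeasure \<mu> C < \<infinity>"
    and rho_borel: "\<And>\<alpha>. sets (\<rho> \<alpha>) = sets borel"
    and rho_nonneg_support: "\<And>\<alpha>. emeasure (\<rho> \<alpha>) {..<0} = 0"
    and rho_loc_fin: "\<And>\<alpha> C. compact C \<Longrightarrow> emeasure (\<rho> \<alpha>) C < \<infinity>"
    and rho_mono: "\<And>\<alpha> \<beta> A. \<alpha> \<le> \<beta> \<Longrightarrow> A \<in> sets borel \<Longrightarrow>
                      emeasure (\<rho> \<alpha>) A \<le> emeasure (\<rho> \<beta>) A"
    and rho_atomless: "\<And>\<alpha> x. emeasure (\<rho> \<alpha>) {x} = 0"
begin

definition decay :: "real \<Rightarrow> real \<Rightarrow> real \<Rightarrow> real" where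
  "decay \<alpha> t s = exp (- measure (\<rho> \<alpha>) {s<..t})"

lemma rho_atMost_finite: "emeasure (\<rho> \<alpha>) {..x} < \<infinity>"
proof -
  have "emeasure (\<rho> \<alpha>) {..x} \<le> emeasure (\<rho> \<alpha>) ({..<0} \<union> {0..max x 0})"
    by (rule emeasure_mono) (auto simp: rho_borel)
  also have "\<dots> \<le> emeasure (\<rho> \<alpha>) {..<0} + emeasure (\<rho> \<alpha>) {0..max x 0}"
    by (rule emeasure_subadditive) (auto simp: rho_borel)
  also have "\<dots> < \<infinity>"
    using rho_nonneg_support rho_loc_fin[of "{0..max x 0}"] by simp
  finally show ?thesis .
qed

lemma measure_rho_atMost_mono: "x \<le> y \<Longrightarrow> measure (\<rho> \<alpha>) {..x} \<le> measure (\<rho> \<alpha>) {..y}"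
  using rho_atMost_finite[of \<alpha> y]
  by (intro measure_mono_fmeasurable) (auto simp: fmeasurable_def rho_borel)

lemma measure_rho_Ioc:
  "measure (\<rho> \<alpha>) {s<..t} = max 0 (measure (\<rho> \<alpha>) {..t} - measure (\<rho> \<alpha>) {..s})"
proof (cases "s \<le> t")
  case True
  then have "{s<..t} = {..t} - {..s}"
    by auto
  with True show ?thesis
    using rho_atMost_finite[of \<alpha> t] measure_rho_atMost_mono[OF True, of \<alpha>]
    by (simp add: measure_Diff rho_borel less_top)
next
  case False
  then show ?thesis
    using measure_rho_atMost_mono[of t s \<alpha>] by simp
qed

lemma decay_mult: "s \<le> r \<Longrightarrow> r \<le> t \<Longrightarrow> decay \<alpha> t s = decay \<alpha> t r * decay \<alpha> r s"
  using measure_rho_atMost_mono[of s r \<alpha>] measure_rho_atMost_mono[of r t \<alpha>]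
  by (simp add: decay_def measure_rho_Ioc[of \<alpha>] exp_add[symmetric])

lemma decay_antimono: "\<alpha> \<le> \<beta> \<Longrightarrow> decay \<beta> t s \<le> decay \<alpha> t s"
proof -
  assume "\<alpha> \<le> \<beta>"
  have "emeasure (\<rho> \<beta>) {s<..t} \<le> emeasure (\<rho> \<beta>) {..t}"
    by (rule emeasure_mono) (auto simp: rho_borel)
  then have "measure (\<rho> \<alpha>) {s<..t} \<le> measure (\<rho> \<beta>) {s<..t}"
    unfolding measure_def using rho_atMost_finite[of \<beta> t] rho_mono[OF \<open>\<alpha> \<le> \<beta>\<close>]
    by (intro enn2real_mono) auto
  then show ?thesis
    by (simp add: decay_def)
qed

lemma decay_antimono_time: "s \<le> t \<Longrightarrow> decay \<alpha> t u \<le> decay \<alpha> s u"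
  using measure_rho_atMost_mono[of s t \<alpha>] by (simp add: decay_def measure_rho_Ioc[of \<alpha>])

lemma decay_nonneg: "0 \<le> decay \<alpha> t s"
  by (simp add: decay_def)

lemma decay_borel[measurable]: "(\<lambda>\<alpha>. decay \<alpha> t s) \<in> borel_measurable borel"
  by (rule borel_measurable_antimono) (simp add: antimono_def decay_antimono)

lemma decay_borel_mu[measurable]: "(\<lambda>\<alpha>. decay \<alpha> t s) \<in> borel_measurable \<mu>"
  by (simp add: measurable_cong_sets[OF mu_borel refl])

lemma Icc_sets_mu[measurable]: "{a..b} \<in> sets \<mu>"
  by (simp add: mu_borel)

lemma decay_continuous: "continuous_on UNIV (\<lambda>p. decay \<alpha> (fst p) (snd p))"
proof -
  let ?F = "\<lambda>y. measure (\<rho> \<alpha>) {..y}"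
  have F: "continuous_on UNIV ?F"
    using rho_borel rho_atMost_finite rho_atomless
    by (intro continuous_at_imp_continuous_on ballI isCont_measure_atMost)
  have "continuous_on UNIV (\<lambda>p::real \<times> real. ?F (fst p))"
    by (intro continuous_on_compose2[OF F] continuous_intros) auto
  moreover have "continuous_on UNIV (\<lambda>p::real \<times> real. ?F (snd p))"
    by (intro continuous_on_compose2[OF F] continuous_intros) auto
  ultimately show ?thesis
    unfolding decay_def measure_rho_Ioc by (intro continuous_intros)
qed

lemma multiplicative_mixture_decay:
  assumes "finite_borel_measure N"
  shows "multiplicative_mixture N decay"
proof (intro multiplicative_mixture.intro multiplicative_mixture_axioms.intro assms)
  show "0 < decay \<alpha> t s" "decay \<alpha> t s \<le> 1" "decay \<alpha> s s = 1" for \<alpha> t s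
    by (simp_all add: decay_def)
qed (fact decay_antimono decay_mult)+

lemma cm_kernel_eq: "cm_kernel \<mu> \<rho> t s = enn2real (\<integral>\<^sup>+\<alpha>. decay \<alpha> t s \<partial>\<mu>)"
  by (simp add: cm_kernel_def decay_def)

lemma cm_kernel_trunc_eq:
  "cm_kernel_trunc \<mu> \<rho> M t s = enn2real (\<integral>\<^sup>+\<alpha>\<in>{- real M..real M}. decay \<alpha> t s \<partial>\<mu>)"
  by (simp add: cm_kernel_trunc_def decay_def)

lemma cm_kernel_trunc_nonneg: "0 \<le> cm_kernel_trunc \<mu> \<rho> M t s"
  by (simp add: cm_kernel_trunc_def)

definition trunc_measure :: "nat \<Rightarrow> real measure" where
  "trunc_measure M = density \<mu> (indicator {- real M..real M})"

lemma emeasure_trunc_measure: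
  "A \<in> sets borel \<Longrightarrow> emeasure (trunc_measure M) A = emeasure \<mu> ({- real M..real M} \<inter> A)"
  unfolding trunc_measure_def by (intro emeasure_restricted) (auto simp: mu_borel)

lemma finite_borel_measure_trunc_measure: "finite_borel_measure (trunc_measure M)"
proof (intro finite_borel_measure.intro finite_measureI finite_borel_measure_axioms.intro)
  show sets: "sets (trunc_measure M) = sets borel"
    by (simp add: trunc_measure_def mu_borel)
  show "emeasure (trunc_measure M) (space (trunc_measure M)) \<noteq> \<infinity>"
    using emeasure_trunc_measure[of UNIV M] mu_loc_fin[of "{- real M..real M}"]
    by (simp add: sets_eq_imp_space_eq[OF sets])
qed

lemma measure_trunc_measure_space:
  "measure (trunc_measure M) (space (trunc_measure M)) = measure \<mu> {- real M..real M}"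
  using emeasure_trunc_measure[of UNIV M]
  by (simp add: measure_def sets_eq_imp_space_eq[of _ borel] trunc_measure_def mu_borel)

lemma cm_kernel_trunc_eq_mixture: "cm_kernel_trunc \<mu> \<rho> M = mixture (trunc_measure M) decay"
proof (intro ext)
  fix t s
  interpret multiplicative_mixture "trunc_measure M" decay
    by (intro multiplicative_mixture_decay finite_borel_measure_trunc_measure)
  have "(\<integral>\<^sup>+\<alpha>\<in>{- real M..real M}. decay \<alpha> t s \<partial>\<mu>) = (\<integral>\<^sup>+\<alpha>. decay \<alpha> t s \<partial>trunc_measure M)"
    unfolding trunc_measure_def
    by (subst nn_integral_density) (auto simp: measurable_cong_sets[OF mu_borel refl] mult.commute)
  also have "\<dots> = ennreal (mixture (trunc_measure M) decay t s)"
    unfolding mixture_def using E_integrable by (intro nn_integral_eq_integral AE_I2 less_imp_le[OF E_pos])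
  finally show "cm_kernel_trunc \<mu> \<rho> M t s = mixture (trunc_measure M) decay t s"
    unfolding cm_kernel_trunc_eq
    by (simp add: mixture_def integral_nonneg less_imp_le[OF E_pos])
qed

lemma eventually_cm_kernel_trunc_condition_P:
  assumes "emeasure \<mu> UNIV \<noteq> 0"
  shows "\<forall>\<^sub>F M in sequentially. condition_P (cm_kernel_trunc \<mu> \<rho> M)"
proof -
  have "(\<lambda>M. emeasure \<mu> {- real M..real M}) \<longlonglongrightarrow> emeasure \<mu> (\<Union>M. {- real M..real M})"
    by (intro Lim_emeasure_incseq) (auto simp: incseq_def mu_borel)
  moreover have "x \<in> (\<Union>M. {- real M..real M})" for x
  proof -
    obtain n :: nat where "\<bar>x\<bar> \<le> real n"
      using real_arch_simple by blast
    then have "x \<in> {- real n..real n}"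
      by (simp add: abs_le_iff)
    then show ?thesis
      by blast
  qed
  then have "(\<Union>M. {- real M..real M}) = UNIV"
    by auto
  ultimately have "\<forall>\<^sub>F M in sequentially. 0 < emeasure \<mu> {- real M..real M}"
    using assms by (intro order_tendstoD(1)) (auto simp: zero_less_iff_neq_zero)
  then show ?thesis
  proof eventually_elim
    case (elim M)
    interpret multiplicative_mixture "trunc_measure M" decay
      by (intro multiplicative_mixture_decay finite_borel_measure_trunc_measure)
    have "0 < measure (trunc_measure M) (space (trunc_measure M))"
      unfolding measure_trunc_measure_space using elim mu_loc_fin[of "{- real M..real M}"]
      by (simp add: measure_def enn2real_positive_iff)
    then show ?case
      unfolding cm_kernel_trunc_eq_mixture using decay_continuous by (rule mixture_condition_P)
  qed
qed

lemma ennreal_cm_kernel_trunc: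
  "ennreal (cm_kernel_trunc \<mu> \<rho> M t s) = (\<integral>\<^sup>+\<alpha>\<in>{- real M..real M}. decay \<alpha> t s \<partial>\<mu>)"
proof -
  have "(\<integral>\<^sup>+\<alpha>\<in>{- real M..real M}. decay \<alpha> t s \<partial>\<mu>) \<le> (\<integral>\<^sup>+\<alpha>. indicator {- real M..real M} \<alpha> \<partial>\<mu>)"
    by (intro nn_integral_mono) (auto simp: decay_def split: split_indicator)
  also have "\<dots> < \<infinity>"
    using mu_loc_fin[of "{- real M..real M}"] by (simp add: mu_borel)
  finally show ?thesis
    by (simp add: cm_kernel_trunc_eq less_top)
qed

lemma cm_kernel_trunc_eq_integral:
  "cm_kernel_trunc \<mu> \<rho> M t s = (\<integral>\<alpha>. decay \<alpha> t s * indicator {- real M..real M} \<alpha> \<partial>\<mu>)"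
  unfolding cm_kernel_trunc_eq nn_integral_set_ennreal
  by (subst integral_eq_nn_integral) (auto simp: decay_nonneg)

lemma integrable_decay:
  assumes "(\<integral>\<^sup>+\<alpha>. decay \<alpha> t s \<partial>\<mu>) < \<infinity>"
  shows "integrable \<mu> (\<lambda>\<alpha>. decay \<alpha> t s)"
  using assms by (intro integrableI_nonneg) (auto simp: decay_nonneg)

lemma cm_kernel_eq_integral: "cm_kernel \<mu> \<rho> t s = (\<integral>\<alpha>. decay \<alpha> t s \<partial>\<mu>)"
  unfolding cm_kernel_eq by (subst integral_eq_nn_integral) (auto simp: decay_nonneg)

lemma cm_kernel_trunc_le:
  assumes "(\<integral>\<^sup>+\<alpha>. decay \<alpha> t s \<partial>\<mu>) < \<infinity>"
  shows "cm_kernel_trunc \<mu> \<rho> M t s \<le> cm_kernel \<mu> \<rho> t s"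
  unfolding cm_kernel_trunc_eq cm_kernel_eq
  using assms by (intro enn2real_mono nn_integral_mono) (auto split: split_indicator)

lemma cm_kernel_trunc_increment_le:
  assumes "(\<integral>\<^sup>+\<alpha>. decay \<alpha> t u \<partial>\<mu>) < \<infinity>" and "(\<integral>\<^sup>+\<alpha>. decay \<alpha> s u \<partial>\<mu>) < \<infinity>"
    and "s \<le> t"
  shows "\<bar>cm_kernel_trunc \<mu> \<rho> M t u - cm_kernel_trunc \<mu> \<rho> M s u\<bar>
    \<le> \<bar>cm_kernel \<mu> \<rho> t u - cm_kernel \<mu> \<rho> s u\<bar>"
proof -
  let ?I = "indicator {- real M..real M} :: real \<Rightarrow> real"
  have int: "integrable \<mu> (\<lambda>\<alpha>. decay \<alpha> t u)" "integrable \<mu> (\<lambda>\<alpha>. decay \<alpha> s u)"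
    using assms(1,2) by (auto intro: integrable_decay)
  then have int_trunc: "integrable \<mu> (\<lambda>\<alpha>. (decay \<alpha> s u - decay \<alpha> t u) * ?I \<alpha>)"
    by (intro integrable_real_mult_indicator) (auto simp: mu_borel)
  have mono: "decay \<alpha> t u \<le> decay \<alpha> s u" for \<alpha>
    using decay_antimono_time[OF assms(3)] .
  have "cm_kernel_trunc \<mu> \<rho> M s u - cm_kernel_trunc \<mu> \<rho> M t u
      = (\<integral>\<alpha>. (decay \<alpha> s u - decay \<alpha> t u) * ?I \<alpha> \<partial>\<mu>)"
    unfolding cm_kernel_trunc_eq_integral left_diff_distrib
    using int by (intro Bochner_Integration.integral_diff[symmetric] integrable_real_mult_indicator)
      (auto simp: mu_borel)
  moreover have "0 \<le> (\<integral>\<alpha>. (decay \<alpha> s u - decay \<alpha> t u) * ?I \<alpha> \<partial>\<mu>)"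
    using mono by (intro integral_nonneg_AE AE_I2) (simp split: split_indicator)
  moreover have "(\<integral>\<alpha>. (decay \<alpha> s u - decay \<alpha> t u) * ?I \<alpha> \<partial>\<mu>) \<le> (\<integral>\<alpha>. decay \<alpha> s u - decay \<alpha> t u \<partial>\<mu>)"
    using int int_trunc mono by (intro integral_mono) (auto split: split_indicator)
  moreover have "(\<integral>\<alpha>. decay \<alpha> s u - decay \<alpha> t u \<partial>\<mu>) = cm_kernel \<mu> \<rho> s u - cm_kernel \<mu> \<rho> t u"
    using int by (simp add: cm_kernel_eq_integral)
  ultimately show ?thesis
    by linarith
qed

lemma nn_integral_decay_SUP:
  "(SUP M. \<integral>\<^sup>+\<alpha>\<in>{- real M..real M}. decay \<alpha> t s \<partial>\<mu>) = (\<integral>\<^sup>+\<alpha>. decay \<alpha> t s \<partial>\<mu>)"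
proof -
  have "incseq (\<lambda>M \<alpha>. ennreal (decay \<alpha> t s) * indicator {- real M..real M} \<alpha>)"
    by (intro monoI le_funI) (auto split: split_indicator)
  then have "(SUP M. \<integral>\<^sup>+\<alpha>\<in>{- real M..real M}. decay \<alpha> t s \<partial>\<mu>)
      = (\<integral>\<^sup>+\<alpha>. (SUP M. ennreal (decay \<alpha> t s) * indicator {- real M..real M} \<alpha>) \<partial>\<mu>)"
    by (intro nn_integral_monotone_convergence_SUP[symmetric]) (auto simp: mu_borel)
  also have "\<dots> = (\<integral>\<^sup>+\<alpha>. decay \<alpha> t s \<partial>\<mu>)"
  proof (intro nn_integral_cong antisym)
    fix \<alpha>
    obtain n :: nat where "\<bar>\<alpha>\<bar> \<le> real n"
      using real_arch_simple by blast
    then show "ennreal (decay \<alpha> t s) \<le> (SUP M. ennreal (decay \<alpha> t s) * indicator {- real M..real M} \<alpha>)"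
      by (intro SUP_upper2[of n]) (auto simp: abs_le_iff)
  qed (auto intro: SUP_least split: split_indicator)
  finally show ?thesis .
qed

lemma cm_kernel_trunc_tendsto:
  assumes "(\<integral>\<^sup>+\<alpha>. decay \<alpha> t s \<partial>\<mu>) < \<infinity>"
  shows "(\<lambda>M. cm_kernel_trunc \<mu> \<rho> M t s) \<longlonglongrightarrow> cm_kernel \<mu> \<rho> t s"
proof -
  have "incseq (\<lambda>M. \<integral>\<^sup>+\<alpha>\<in>{- real M..real M}. decay \<alpha> t s \<partial>\<mu>)"
    by (intro monoI nn_integral_mono) (auto split: split_indicator)
  then have "(\<lambda>M. \<integral>\<^sup>+\<alpha>\<in>{- real M..real M}. decay \<alpha> t s \<partial>\<mu>) \<longlonglongrightarrow> (\<integral>\<^sup>+\<alpha>. decay \<alpha> t s \<partial>\<mu>)"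
    unfolding nn_integral_decay_SUP[symmetric] by (rule LIMSEQ_SUP)
  then show ?thesis
    unfolding cm_kernel_trunc_eq cm_kernel_eq
    using assms by (intro tendsto_enn2real) (auto simp: less_top)
qed

lemma cm_kernel_trunc_borel[measurable]: "(\<lambda>s. cm_kernel_trunc \<mu> \<rho> M t s) \<in> borel_measurable borel"
proof -
  interpret multiplicative_mixture "trunc_measure M" decay
    by (intro multiplicative_mixture_decay finite_borel_measure_trunc_measure)
  have "continuous_on UNIV (\<lambda>p. mixture (trunc_measure M) decay (fst p) (snd p))"
    using decay_continuous by (rule mixture_continuous_on)
  from continuous_on_compose2[OF this continuous_on_Pair[OF continuous_on_const continuous_on_id]]
  have "continuous_on UNIV (\<lambda>s. mixture (trunc_measure M) decay t s)"
    by simp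
  then show ?thesis
    unfolding cm_kernel_trunc_eq_mixture by (rule borel_measurable_continuous_onI)
qed

lemma cm_kernel_borel[measurable]: "(\<lambda>s. cm_kernel \<mu> \<rho> t s) \<in> borel_measurable borel"
proof -
  have "cm_kernel \<mu> \<rho> t s = enn2real (SUP M. ennreal (cm_kernel_trunc \<mu> \<rho> M t s))" for s
    unfolding cm_kernel_eq ennreal_cm_kernel_trunc nn_integral_decay_SUP ..
  then show ?thesis
    by simp
qed

lemma holder_bound_cm_kernel_trunc:
  assumes finite: "\<And>t s. 0 < s \<Longrightarrow> s < t \<Longrightarrow> (\<integral>\<^sup>+\<alpha>. decay \<alpha> t s \<partial>\<mu>) < \<infinity>"
    and holder: "holder_bound (cm_kernel \<mu> \<rho>) \<eta> \<gamma> T"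
  shows "holder_bound (cm_kernel_trunc \<mu> \<rho> M) \<eta> \<gamma> T"
  unfolding holder_bound_def
proof (intro allI impI)
  fix t s :: real
  assume ts: "0 \<le> s \<and> s \<le> t \<and> t \<le> T"
  let ?G = "cm_kernel \<mu> \<rho>" and ?GM = "cm_kernel_trunc \<mu> \<rho> M"
  have "(\<integral>\<^sup>+u\<in>{s..t}. ennreal ((?GM t u)\<^sup>2) \<partial>lborel) \<le> (\<integral>\<^sup>+u\<in>{s..t}. ennreal ((?G t u)\<^sup>2) \<partial>lborel)"
    using ts finite cm_kernel_trunc_le
    by (intro set_nn_integral_Icc_mono_interior ennreal_leI power_mono) (auto simp: cm_kernel_trunc_nonneg)
  moreover have "(\<integral>\<^sup>+u\<in>{0..s}. ennreal ((?GM t u - ?GM s u)\<^sup>2) \<partial>lborel)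
      \<le> (\<integral>\<^sup>+u\<in>{0..s}. ennreal ((?G t u - ?G s u)\<^sup>2) \<partial>lborel)"
    using ts finite cm_kernel_trunc_increment_le
    by (intro set_nn_integral_Icc_mono_interior ennreal_leI) (auto simp: abs_le_square_iff[symmetric])
  ultimately show "(\<integral>\<^sup>+u\<in>{s..t}. ennreal ((?GM t u)\<^sup>2) \<partial>lborel)
      + (\<integral>\<^sup>+u\<in>{0..s}. ennreal ((?GM t u - ?GM s u)\<^sup>2) \<partial>lborel) \<le> ennreal (\<eta> * (t - s) powr (2 * \<gamma>))"
    using holder ts unfolding holder_bound_def by (meson add_mono order_trans)
qed

lemma cm_kernel_trunc_L2_tendsto:
  assumes finite: "\<And>u. 0 < u \<Longrightarrow> u < t \<Longrightarrow> (\<integral>\<^sup>+\<alpha>. decay \<alpha> t u \<partial>\<mu>) < \<infinity>"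
    and L2: "(\<integral>\<^sup>+u\<in>{0..t}. ennreal ((cm_kernel \<mu> \<rho> t u)\<^sup>2) \<partial>lborel) < \<infinity>"
  shows "(\<lambda>M. \<integral>\<^sup>+u\<in>{0..t}. ennreal ((cm_kernel \<mu> \<rho> t u - cm_kernel_trunc \<mu> \<rho> M t u)\<^sup>2) \<partial>lborel)
    \<longlonglongrightarrow> 0"
proof -
  let ?G = "cm_kernel \<mu> \<rho>" and ?GM = "\<lambda>M. cm_kernel_trunc \<mu> \<rho> M"
  have "(\<lambda>M. \<integral>\<^sup>+u. ennreal ((?G t u - ?GM M t u)\<^sup>2) * indicator {0..t} u \<partial>lborel)
    \<longlonglongrightarrow> (\<integral>\<^sup>+u. 0 \<partial>(lborel :: real measure))"
  proof (rule nn_integral_dominated_convergence[where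
        u="\<lambda>M u. ennreal ((?G t u - ?GM M t u)\<^sup>2) * indicator {0..t} u" and u'="\<lambda>_. 0" and
        w="\<lambda>u. ennreal ((?G t u)\<^sup>2) * indicator {0..t} u"])
    show "(\<integral>\<^sup>+u. ennreal ((?G t u)\<^sup>2) * indicator {0..t} u \<partial>lborel) < \<infinity>"
      using L2 .
    show "AE u in lborel. ennreal ((?G t u - ?GM M t u)\<^sup>2) * indicator {0..t} u
        \<le> ennreal ((?G t u)\<^sup>2) * indicator {0..t} u" for M
    proof -
      have "(?G t u - ?GM M t u)\<^sup>2 \<le> (?G t u)\<^sup>2" if "0 < u" "u < t" for u
        using cm_kernel_trunc_le[OF finite[OF that]] cm_kernel_trunc_nonneg[of M t u]
        by (intro power_mono) auto
      from AE_lborel_Icc_interior[of 0 t, OF this] show ?thesis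
        by (rule eventually_mono) (auto intro: ennreal_leI split: split_indicator)
    qed
    show "AE u in lborel. (\<lambda>M. ennreal ((?G t u - ?GM M t u)\<^sup>2) * indicator {0..t} u) \<longlonglongrightarrow> 0"
    proof -
      have "(\<lambda>M. ennreal ((?G t u - ?GM M t u)\<^sup>2)) \<longlonglongrightarrow> ennreal ((?G t u - ?G t u)\<^sup>2)"
        if "0 < u" "u < t" for u
        using cm_kernel_trunc_tendsto[OF finite[OF that]] by (intro tendsto_intros)
      from AE_lborel_Icc_interior[of 0 t, OF this] show ?thesis
        by (rule eventually_mono) (auto split: split_indicator)
    qed
  qed measurable
  then show ?thesis
    by simp
qed

end

theorem mainTheorem7:
  fixes \<mu> :: "real measure" and \<rho> :: "real \<Rightarrow> real measure"
  assumes mu_borel: "sets \<mu> = sets borel"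
    and mu_loc_fin: "\<And>C. compact C \<Longrightarrow> emeasure \<mu> C < \<infinity>"
    and mu_nontrivial: "emeasure \<mu> UNIV \<noteq> 0"
    and rho_borel: "\<And>\<alpha>. sets (\<rho> \<alpha>) = sets borel"
    and rho_nonneg_support: "\<And>\<alpha>. emeasure (\<rho> \<alpha>) {..<0} = 0"
    and rho_loc_fin: "\<And>\<alpha> C. compact C \<Longrightarrow> emeasure (\<rho> \<alpha>) C < \<infinity>"
    and rho_mono: "\<And>\<alpha> \<beta> A. \<alpha> \<le> \<beta> \<Longrightarrow> A \<in> sets borel \<Longrightarrow>
                      emeasure (\<rho> \<alpha>) A \<le> emeasure (\<rho> \<beta>) A"
    and rho_atomless: "\<And>\<alpha> x. emeasure (\<rho> \<alpha>) {x} = 0"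
    and Gamma_fin: "\<And>t s. 0 < s \<Longrightarrow> s < t \<Longrightarrow>
          (\<integral>\<^sup>+ \<alpha>. ennreal (exp (- measure (\<rho> \<alpha>) {s<..t})) \<partial>\<mu>) < \<infinity>"
    and K: "condition_K (cm_kernel \<mu> \<rho>)"
  shows "(\<forall>\<^sub>F M in sequentially. condition_P (cm_kernel_trunc \<mu> \<rho> M))
       \<and> (\<forall>t \<ge> 0. (\<lambda>M. \<integral>\<^sup>+ s \<in> {0..t}.
              ennreal ((cm_kernel \<mu> \<rho> t s - cm_kernel_trunc \<mu> \<rho> M t s)\<^sup>2) \<partial>lborel)
            \<longlonglongrightarrow> 0)
       \<and> (\<forall>T. \<exists>\<eta> > 0. \<exists>\<gamma>. 0 < \<gamma> \<and> \<gamma> \<le> 1/2 \<and>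
            (\<forall>M \<ge> 1. holder_bound (cm_kernel_trunc \<mu> \<rho> M) \<eta> \<gamma> T))"
proof -
  interpret cm_kernel_data \<mu> \<rho>
    using mu_borel mu_loc_fin rho_borel rho_nonneg_support rho_loc_fin rho_mono rho_atomless
    by unfold_locales
  have finite: "\<And>t s. 0 < s \<Longrightarrow> s < t \<Longrightarrow> (\<integral>\<^sup>+\<alpha>. decay \<alpha> t s \<partial>\<mu>) < \<infinity>"
    using Gamma_fin by (simp add: decay_def)
  have "(\<lambda>M. \<integral>\<^sup>+ s \<in> {0..t}. ennreal ((cm_kernel \<mu> \<rho> t s - cm_kernel_trunc \<mu> \<rho> M t s)\<^sup>2) \<partial>lborel)
      \<longlonglongrightarrow> 0" if "0 \<le> t" for t
  proof -
    obtain \<eta> \<gamma> where "holder_bound (cm_kernel \<mu> \<rho>) \<eta> \<gamma> t"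
      using K unfolding condition_K_def by blast
    with \<open>0 \<le> t\<close> show ?thesis
      using finite by (intro cm_kernel_trunc_L2_tendsto holder_bound_L2_finite) auto
  qed
  moreover have "\<exists>\<eta> > 0. \<exists>\<gamma>. 0 < \<gamma> \<and> \<gamma> \<le> 1/2 \<and>
      (\<forall>M \<ge> 1. holder_bound (cm_kernel_trunc \<mu> \<rho> M) \<eta> \<gamma> T)" for T
    using K finite holder_bound_cm_kernel_trunc unfolding condition_K_def by meson
  ultimately show ?thesis
    using eventually_cm_kernel_trunc_condition_P[OF mu_nontrivial] by blast
qed

end
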